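(* If a non-linear regularizing filter $(\varphi_\alpha)_{\alpha>0}$ satisfies Assumption A with constants $b,c>0$ (as in (A2)), then it satisfies Assumption B with $d=bc$ and $e=1/(2\sqrt b)$.
   Context: A non-linear regularizing filter is a family $(\varphi_\alpha)_{\alpha>0}$ of functions $\varphi_\alpha\colon(0,\infty)\times\mathbb{R}\to\mathbb{R}$ such that for all $\alpha,\kappa>0$: (F1) $\varphi_\alpha(\kappa,\cdot)$ is non-decreasing; (F2) $\varphi_\alpha(\kappa,\cdot)$ is 1-Lipschitz; (F3) $\varphi_\alpha(\kappa,0)=0$; (F4) $\lim_{\alpha\to0}\varphi_\alpha(\kappa,c)=c$ for all $c\in\mathbb{R}$. Assumption A: (A1) for all $\kappa>0$ and $y\in\mathbb{R}$, the set $\{(w-y)/\alpha:\varphi_\alpha(\kappa,w)=y\}$ does not depend on $\alpha>0$; (A2) for some $\tilde\alpha>0$ there exist $b,c>0$ such that for all $\kappa>0$ and $x\in\mathbb{R}$: $|x|\le\min\big(\varphi_{\tilde\alpha}(\kappa,\cdot)^{-1}(c\kappa)\big)\Rightarrow|\varphi_{\tilde\alpha}(\kappa,x)|\le\frac{\kappa^2}{\kappa^2+\tilde\alpha b}|x|$ (min denotes the smallest element of the preimage interval). Assumption B: (B1) for all $\kappa>0$ and $x\in\mathbb{R}$, the family $(|\varphi_\alpha(\kappa,x)|)_{\alpha>0}$ is monotonically increasing as $\alpha\downarrow0$ (i.e. $\alpha<\alpha'$ implies $|\varphi_\alpha(\kappa,x)|\ge|\varphi_{\alpha'}(\kappa,x)|$);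 (B2) there exist $d,e>0$ such that for all $\kappa>0$, $\alpha>0$, $x\in\mathbb{R}$: $|x|\le d\alpha/\kappa\Rightarrow|\varphi_\alpha(\kappa,x)|\le\frac{e\kappa}{\sqrt\alpha}|x|$. *)

theory Defs
  imports "HOL-Analysis.Analysis"
begin

text \<open>A family of filters is encoded as phi :: real => real => real => real,
  where phi alpha kappa x stands for phi_alpha(kappa, x); only alpha > 0 and kappa > 0 matter.\<close>

definition nl_reg_filter :: "(real \<Rightarrow> real \<Rightarrow> real \<Rightarrow> real) \<Rightarrow> bool" where
  "nl_reg_filter phi \<longleftrightarrow>
     (\<forall>\<alpha>>0. \<forall>\<kappa>>0.
        mono (phi \<alpha> \<kappa>) \<and>
        (\<forall>x y. \<bar>phi \<alpha> \<kappa> x - phi \<alpha> \<kappa> y\<bar> \<le> \<bar>x - y\<bar>) \<and>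
        phi \<alpha> \<kappa> 0 = 0) \<and>
     (\<forall>\<kappa>>0. \<forall>c. ((\<lambda>\<alpha>. phi \<alpha> \<kappa> c) \<longlongrightarrow> c) (at_right 0))"

definition preimage_min :: "(real \<Rightarrow> real \<Rightarrow> real \<Rightarrow> real) \<Rightarrow> real \<Rightarrow> real \<Rightarrow> real \<Rightarrow> real" where
  "preimage_min phi \<alpha> \<kappa> y = Inf {w. phi \<alpha> \<kappa> w = y}"

definition assumption_A1 :: "(real \<Rightarrow> real \<Rightarrow> real \<Rightarrow> real) \<Rightarrow> bool" where
  "assumption_A1 phi \<longleftrightarrow>
     (\<forall>\<kappa>>0. \<forall>y. \<forall>\<alpha>>0. \<forall>\<alpha>'>0.
        {(w - y) / \<alpha> | w. phi \<alpha> \<kappa> w = y} = {(w - y) / \<alpha>' | w. phi \<alpha>' \<kappa> w = y})"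

definition assumption_A2 :: "(real \<Rightarrow> real \<Rightarrow> real \<Rightarrow> real) \<Rightarrow> real \<Rightarrow> real \<Rightarrow> real \<Rightarrow> bool" where
  "assumption_A2 phi \<alpha>t b c \<longleftrightarrow>
     (\<forall>\<kappa>>0. \<forall>x. \<bar>x\<bar> \<le> preimage_min phi \<alpha>t \<kappa> (c * \<kappa>) \<longrightarrow>
        \<bar>phi \<alpha>t \<kappa> x\<bar> \<le> \<kappa>\<^sup>2 / (\<kappa>\<^sup>2 + \<alpha>t * b) * \<bar>x\<bar>)"

definition assumption_B1 :: "(real \<Rightarrow> real \<Rightarrow> real \<Rightarrow> real) \<Rightarrow> bool" where
  "assumption_B1 phi \<longleftrightarrow>
     (\<forall>\<kappa>>0. \<forall>x. \<forall>\<alpha>>0. \<forall>\<alpha>'>0. \<alpha> < \<alpha>' \<longrightarrow> \<bar>phi \<alpha> \<kappa> x\<bar> \<ge> \<bar>phi \<alpha>' \<kappa> x\<bar>)"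

definition assumption_B2 :: "(real \<Rightarrow> real \<Rightarrow> real \<Rightarrow> real) \<Rightarrow> real \<Rightarrow> real \<Rightarrow> bool" where
  "assumption_B2 phi d e \<longleftrightarrow>
     (\<forall>\<kappa>>0. \<forall>\<alpha>>0. \<forall>x. \<bar>x\<bar> \<le> d * \<alpha> / \<kappa> \<longrightarrow>
        \<bar>phi \<alpha> \<kappa> x\<bar> \<le> e * \<kappa> / sqrt \<alpha> * \<bar>x\<bar>)"

end

theory Submission
  imports Defs
begin

text \<open>By (A1) the residual shifts (w - y) / alpha of the preimages w of a value y do not
  depend on alpha. Rescaling to a very large alpha and using monotonicity shows that a strictly
  smaller residual w - phi(w) forces a value phi(w) that is not larger. For x >= 0 and
  alpha < alpha', the point with the residual shift of x under phi_alpha' lies below x, which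
  gives (B1). For (B2), the point w = phi_alpha(x) + alpha_t (x - phi_alpha(x)) / alpha is mapped
  by phi_alpha_t to phi_alpha(x); comparing residuals with the smallest preimage m of c kappa
  keeps w in [-m, m], where (A2) contracts by kappa^2 / (kappa^2 + alpha_t b), and AM-GM turns
  this into the factor kappa / (2 sqrt (b alpha)). Negative arguments reduce to nonnegative ones
  through the odd reflection -phi(-x), which is again a filter satisfying (A1).\<close>

lemma nl_reg_filterD:
  assumes "nl_reg_filter phi" "\<alpha> > 0" "\<kappa> > 0"
  shows nl_reg_filter_mono: "mono (phi \<alpha> \<kappa>)"
    and nl_reg_filter_lipschitz: "\<bar>phi \<alpha> \<kappa> x - phi \<alpha> \<kappa> y\<bar> \<le> \<bar>x - y\<bar>"
    and nl_reg_filter_zero: "phi \<alpha> \<kappa> 0 = 0"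
  using assms unfolding nl_reg_filter_def by auto

lemma nl_reg_filter_nonneg_le:
  assumes "nl_reg_filter phi" "\<alpha> > 0" "\<kappa> > 0" "x \<ge> 0"
  shows "0 \<le> phi \<alpha> \<kappa> x \<and> phi \<alpha> \<kappa> x \<le> x"
  using monoD[OF nl_reg_filter_mono[OF assms(1-3)] assms(4)]
    nl_reg_filter_lipschitz[OF assms(1-3), of x 0] nl_reg_filter_zero[OF assms(1-3)] assms(4)
  by auto

lemma nl_reg_filter_pos_imp_pos:
  assumes "nl_reg_filter phi" "\<alpha> > 0" "\<kappa> > 0" "phi \<alpha> \<kappa> w > 0"
  shows "w > 0"
proof (rule ccontr)
  assume "\<not> w > 0"
  then have "phi \<alpha> \<kappa> w \<le> phi \<alpha> \<kappa> 0"
    using nl_reg_filter_mono[OF assms(1-3)] by (simp add: monoD)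
  with assms(4) show False by (simp add: nl_reg_filter_zero[OF assms(1-3)])
qed

lemma nl_reg_filter_continuous:
  assumes "nl_reg_filter phi" "\<alpha> > 0" "\<kappa> > 0"
  shows "continuous_on UNIV (phi \<alpha> \<kappa>)"
proof -
  have "1-lipschitz_on UNIV (phi \<alpha> \<kappa>)"
    using nl_reg_filter_lipschitz[OF assms] by (intro lipschitz_onI) (auto simp: dist_real_def)
  then show ?thesis by (rule lipschitz_on_continuous_on)
qed

definition reflect_filter :: "(real \<Rightarrow> real \<Rightarrow> real \<Rightarrow> real) \<Rightarrow> real \<Rightarrow> real \<Rightarrow> real \<Rightarrow> real" where
  "reflect_filter phi = (\<lambda>\<alpha> \<kappa> x. - phi \<alpha> \<kappa> (- x))"

lemma nl_reg_filter_reflect: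
  assumes "nl_reg_filter phi"
  shows "nl_reg_filter (reflect_filter phi)"
  unfolding nl_reg_filter_def reflect_filter_def
proof (intro conjI allI impI)
  fix \<alpha> \<kappa> :: real
  assume "\<alpha> > 0" "\<kappa> > 0"
  note D = nl_reg_filterD[OF assms this]
  show "mono (\<lambda>x. - phi \<alpha> \<kappa> (- x))"
  proof (rule monoI)
    fix x y :: real
    assume "x \<le> y"
    then have "phi \<alpha> \<kappa> (- y) \<le> phi \<alpha> \<kappa> (- x)" using D(1) by (simp add: monoD)
    then show "- phi \<alpha> \<kappa> (- x) \<le> - phi \<alpha> \<kappa> (- y)" by simp
  qed
  show "\<bar>- phi \<alpha> \<kappa> (- x) - - phi \<alpha> \<kappa> (- y)\<bar> \<le> \<bar>x - y\<bar>" for x y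
    using D(2)[of "- y" "- x"] by simp
  show "- phi \<alpha> \<kappa> (- 0) = 0" using D(3) by simp
next
  fix \<kappa> c :: real
  assume "\<kappa> > 0"
  then have "((\<lambda>\<alpha>. phi \<alpha> \<kappa> (- c)) \<longlongrightarrow> - c) (at_right 0)"
    using assms unfolding nl_reg_filter_def by simp
  from tendsto_minus[OF this] show "((\<lambda>\<alpha>. - phi \<alpha> \<kappa> (- c)) \<longlongrightarrow> c) (at_right 0)" by simp
qed

lemma assumption_A1D:
  assumes "assumption_A1 phi" "\<kappa> > 0" "\<alpha> > 0" "\<alpha>' > 0"
  shows "{(w - y) / \<alpha> | w. phi \<alpha> \<kappa> w = y} = {(w - y) / \<alpha>' | w. phi \<alpha>' \<kappa> w = y}"
  using assms(1)[unfolded assumption_A1_def, rule_format, OF assms(2) assms(3,4)] .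

lemma assumption_A1_reflect:
  assumes "assumption_A1 phi"
  shows "assumption_A1 (reflect_filter phi)"
  unfolding assumption_A1_def
proof (intro allI impI)
  fix \<kappa> y \<alpha> \<alpha>' :: real
  assume "\<kappa> > 0" "\<alpha> > 0" "\<alpha>' > 0"
  have reflected: "{(w - y) / \<beta> | w. reflect_filter phi \<beta> \<kappa> w = y}
      = uminus ` {(w - - y) / \<beta> | w. phi \<beta> \<kappa> w = - y}" for \<beta>
  proof (intro set_eqI iffI)
    fix z assume "z \<in> {(w - y) / \<beta> | w. reflect_filter phi \<beta> \<kappa> w = y}"
    then obtain w where "z = (w - y) / \<beta>" "reflect_filter phi \<beta> \<kappa> w = y" by blast
    then have "- z = (- w - - y) / \<beta>" "phi \<beta> \<kappa> (- w) = - y"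
      by (simp_all add: reflect_filter_def minus_divide_left)
    then show "z \<in> uminus ` {(w - - y) / \<beta> | w. phi \<beta> \<kappa> w = - y}"
      by (intro image_eqI[of z uminus "- z"]) auto
  next
    fix z assume "z \<in> uminus ` {(w - - y) / \<beta> | w. phi \<beta> \<kappa> w = - y}"
    then obtain w where "z = - ((w - - y) / \<beta>)" "phi \<beta> \<kappa> w = - y" by blast
    then have "z = (- w - y) / \<beta>" "reflect_filter phi \<beta> \<kappa> (- w) = y"
      by (simp_all add: reflect_filter_def minus_divide_left)
    then show "z \<in> {(w - y) / \<beta> | w. reflect_filter phi \<beta> \<kappa> w = y}" by blast
  qed
  show "{(w - y) / \<alpha> | w. reflect_filter phi \<alpha> \<kappa> w = y}
      = {(w - y) / \<alpha>' | w. reflect_filter phi \<alpha>' \<kappa> w = y}"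
    unfolding reflected assumption_A1D[OF assms \<open>\<kappa> > 0\<close> \<open>\<alpha> > 0\<close> \<open>\<alpha>' > 0\<close>] ..
qed

lemma assumption_A1_rescale:
  assumes "assumption_A1 phi" "\<kappa> > 0" "\<beta> > 0" "\<beta>' > 0" "phi \<beta> \<kappa> w = y"
  shows "phi \<beta>' \<kappa> (y + \<beta>' * ((w - y) / \<beta>)) = y"
proof -
  have "(w - y) / \<beta> \<in> {(w - y) / \<beta>' | w. phi \<beta>' \<kappa> w = y}"
    using assumption_A1D[OF assms(1-4)] assms(5) by blast
  then obtain w' where "(w - y) / \<beta> = (w' - y) / \<beta>'" "phi \<beta>' \<kappa> w' = y" by blast
  with \<open>\<beta>' > 0\<close> show ?thesis by (simp add: field_simps)
qed

lemma assumption_A1_residual_less_imp_le: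
  assumes "nl_reg_filter phi" "assumption_A1 phi" "\<kappa> > 0" "\<beta> > 0"
    and "w - phi \<beta> \<kappa> w < u - phi \<beta> \<kappa> u"
  shows "phi \<beta> \<kappa> w \<le> phi \<beta> \<kappa> u"
proof (rule ccontr)
  define y v where "y = phi \<beta> \<kappa> w" and "v = phi \<beta> \<kappa> u"
  define s \<sigma> where "s = (w - y) / \<beta>" and "\<sigma> = (u - v) / \<beta>"
  assume "\<not> y \<le> v"
  have "s < \<sigma>" using assms(4,5) by (simp add: s_def \<sigma>_def y_def v_def divide_strict_right_mono)
  \<comment> \<open>rescaled to a, the residual gap a (\<sigma> - s) exceeds the value gap y - v\<close>
  define a where "a = (y - v) / (\<sigma> - s) + 1"
  have "a > 0" using \<open>s < \<sigma>\<close> \<open>\<not> y \<le> v\<close> by (simp add: a_def add_pos_nonneg)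
  have "a * (\<sigma> - s) = (y - v) + (\<sigma> - s)" using \<open>s < \<sigma>\<close> by (simp add: a_def field_simps)
  then have "y + a * s \<le> v + a * \<sigma>" using \<open>s < \<sigma>\<close> by (simp add: algebra_simps)
  then have "phi a \<kappa> (y + a * s) \<le> phi a \<kappa> (v + a * \<sigma>)"
    using nl_reg_filter_mono[OF assms(1) \<open>a > 0\<close> assms(3)] by (simp add: monoD)
  moreover have "phi a \<kappa> (y + a * s) = y" "phi a \<kappa> (v + a * \<sigma>) = v"
    using assumption_A1_rescale[OF assms(2-4) \<open>a > 0\<close>] by (simp_all add: s_def \<sigma>_def y_def v_def)
  ultimately show False using \<open>\<not> y \<le> v\<close> by simp
qed

lemma assumption_A1_pos_in_range:
  assumes "nl_reg_filter phi" "assumption_A1 phi" "\<kappa> > 0" "\<beta> > 0" "v > 0"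
  shows "\<exists>w. phi \<beta> \<kappa> w = v"
proof -
  have "((\<lambda>\<alpha>. phi \<alpha> \<kappa> (2 * v)) \<longlongrightarrow> 2 * v) (at_right 0)"
    using assms(1,3) unfolding nl_reg_filter_def by blast
  then have "\<forall>\<^sub>F \<alpha> in at_right 0. \<bar>phi \<alpha> \<kappa> (2 * v) - 2 * v\<bar> < v"
    using \<open>v > 0\<close> by (simp add: tendsto_iff dist_real_def)
  moreover have "\<forall>\<^sub>F \<alpha> in at_right (0::real). \<alpha> > 0" by (simp add: eventually_at_right_less)
  ultimately have "\<forall>\<^sub>F \<alpha> in at_right 0. \<alpha> > 0 \<and> v \<le> phi \<alpha> \<kappa> (2 * v)"
    by eventually_elim auto
  then obtain a where "a > 0" "v \<le> phi a \<kappa> (2 * v)"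
    using eventually_happens'[OF trivial_limit_at_right_real] by blast
  moreover have "phi a \<kappa> 0 \<le> v" using nl_reg_filter_zero[OF assms(1) \<open>a > 0\<close> assms(3)] assms(5) by simp
  moreover have "continuous_on {0..2 * v} (phi a \<kappa>)"
    using nl_reg_filter_continuous[OF assms(1) \<open>a > 0\<close> assms(3)] by (rule continuous_on_subset) simp
  ultimately obtain w where "phi a \<kappa> w = v"
    using IVT'[of "phi a \<kappa>" 0 v "2 * v"] \<open>v > 0\<close> by auto
  from assumption_A1_rescale[OF assms(2,3) \<open>a > 0\<close> assms(4) this] show ?thesis by blast
qed

lemma preimage_min_preimage:
  assumes "nl_reg_filter phi" "assumption_A1 phi" "\<kappa> > 0" "\<beta> > 0" "v > 0"
  shows "phi \<beta> \<kappa> (preimage_min phi \<beta> \<kappa> v) = v"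
proof -
  let ?P = "{w. phi \<beta> \<kappa> w = v}"
  have "?P \<noteq> {}" using assumption_A1_pos_in_range[OF assms] by blast
  moreover have "bdd_below ?P"
    using nl_reg_filter_pos_imp_pos[OF assms(1,4,3)] assms(5) by (auto intro!: bdd_belowI[of _ 0] less_imp_le)
  moreover have "closed ?P"
    by (rule closed_Collect_eq[OF nl_reg_filter_continuous[OF assms(1,4,3)]]) simp
  ultimately have "Inf ?P \<in> ?P" by (rule closed_contains_Inf)
  then show ?thesis by (simp add: preimage_min_def)
qed

lemma assumption_A1_antimono_nonneg:
  assumes "nl_reg_filter phi" "assumption_A1 phi" "\<kappa> > 0" "\<alpha> > 0" "\<alpha> \<le> \<alpha>'" "x \<ge> 0"
  shows "phi \<alpha>' \<kappa> x \<le> phi \<alpha> \<kappa> x"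
proof -
  define y where "y = phi \<alpha>' \<kappa> x"
  have "\<alpha>' > 0" using assms(4,5) by linarith
  have "0 \<le> y" "y \<le> x" using nl_reg_filter_nonneg_le[OF assms(1) \<open>\<alpha>' > 0\<close> assms(3,6)] by (auto simp: y_def)
  have "\<alpha> / \<alpha>' * (x - y) \<le> x - y"
    using \<open>y \<le> x\<close> assms(4,5) by (intro mult_left_le_one_le) auto
  then have "y + \<alpha> * ((x - y) / \<alpha>') \<le> x" by (simp add: algebra_simps)
  then have "phi \<alpha> \<kappa> (y + \<alpha> * ((x - y) / \<alpha>')) \<le> phi \<alpha> \<kappa> x"
    using nl_reg_filter_mono[OF assms(1,4,3)] by (simp add: monoD)
  then show ?thesis
    using assumption_A1_rescale[OF assms(2,3) \<open>\<alpha>' > 0\<close> assms(4)] by (simp add: y_def)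
qed

lemma assumption_B1_if_A1:
  assumes "nl_reg_filter phi" "assumption_A1 phi"
  shows "assumption_B1 phi"
  unfolding assumption_B1_def
proof (intro allI impI)
  fix \<kappa> x \<alpha> \<alpha>' :: real
  assume "\<kappa> > 0" "\<alpha> > 0" "\<alpha>' > 0" "\<alpha> < \<alpha>'"
  show "\<bar>phi \<alpha>' \<kappa> x\<bar> \<le> \<bar>phi \<alpha> \<kappa> x\<bar>"
  proof (cases "x \<ge> 0")
    case True
    then show ?thesis
      using assumption_A1_antimono_nonneg[OF assms \<open>\<kappa> > 0\<close> \<open>\<alpha> > 0\<close> _ True, of \<alpha>']
        nl_reg_filter_nonneg_le[OF assms(1) \<open>\<alpha>' > 0\<close> \<open>\<kappa> > 0\<close> True] \<open>\<alpha> < \<alpha>'\<close>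
      by simp
  next
    case False
    then have "- x \<ge> 0" by simp
    then show ?thesis
      using assumption_A1_antimono_nonneg[OF nl_reg_filter_reflect[OF assms(1)]
          assumption_A1_reflect[OF assms(2)] \<open>\<kappa> > 0\<close> \<open>\<alpha> > 0\<close> _ \<open>- x \<ge> 0\<close>, of \<alpha>']
        nl_reg_filter_nonneg_le[OF nl_reg_filter_reflect[OF assms(1)] \<open>\<alpha>' > 0\<close> \<open>\<kappa> > 0\<close> \<open>- x \<ge> 0\<close>]
        \<open>\<alpha> < \<alpha>'\<close>
      by (simp add: reflect_filter_def)
  qed
qed

lemma contraction_margin:
  fixes \<kappa> \<beta> b c m :: real
  assumes "\<kappa> > 0" "\<beta> > 0" "b > 0" "c * \<kappa> \<le> \<kappa>\<^sup>2 / (\<kappa>\<^sup>2 + \<beta> * b) * m"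
  shows "\<beta> * (b * c / \<kappa>) \<le> m - \<kappa>\<^sup>2 / (\<kappa>\<^sup>2 + \<beta> * b) * m"
proof -
  have D: "\<kappa>\<^sup>2 + \<beta> * b > 0" using assms by (intro add_nonneg_pos) auto
  have "\<kappa> * (c * (\<kappa>\<^sup>2 + \<beta> * b)) \<le> \<kappa> * (\<kappa> * m)"
    using assms(4) D by (simp add: field_simps power2_eq_square)
  then have "c * (\<kappa>\<^sup>2 + \<beta> * b) \<le> \<kappa> * m" using assms(1) by simp
  then have "\<beta> * b * (c * (\<kappa>\<^sup>2 + \<beta> * b)) \<le> \<beta> * b * (\<kappa> * m)"
    using assms(2,3) by (simp add: mult_left_mono)
  then show ?thesis using assms(1) D by (simp add: field_simps power2_eq_square)
qed

lemma contraction_imp_sqrt_bound: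
  fixes \<kappa> \<alpha> \<beta> b Y \<sigma> :: real
  assumes "\<kappa> > 0" "\<alpha> > 0" "\<beta> > 0" "b > 0" "Y \<ge> 0" "\<sigma> \<ge> 0"
    and "Y \<le> \<kappa>\<^sup>2 / (\<kappa>\<^sup>2 + \<beta> * b) * (Y + \<beta> * \<sigma>)"
  shows "Y \<le> 1 / (2 * sqrt b) * \<kappa> / sqrt \<alpha> * (Y + \<alpha> * \<sigma>)"
proof -
  define r where "r = sqrt b * sqrt \<alpha>"
  have "r > 0" "r\<^sup>2 = b * \<alpha>" using assms(2,4) by (simp_all add: r_def power_mult_distrib)
  have "\<kappa>\<^sup>2 + \<beta> * b > 0" using assms(3,4) by (intro add_nonneg_pos) auto
  with assms(7) have "Y * (\<kappa>\<^sup>2 + \<beta> * b) \<le> \<kappa>\<^sup>2 * (Y + \<beta> * \<sigma>)" by (simp add: le_divide_eq)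
  then have "\<beta> * (Y * b) \<le> \<beta> * (\<kappa>\<^sup>2 * \<sigma>)" by (simp add: algebra_simps)
  then have Yb: "Y * b \<le> \<kappa>\<^sup>2 * \<sigma>" using assms(3) by simp
  have "2 * \<kappa> * r \<le> \<kappa>\<^sup>2 + r\<^sup>2" using sum_squares_bound[of \<kappa> r] by (simp add: power2_eq_square)
  from mult_left_mono[OF this assms(5)]
  have "\<kappa> * (2 * r * Y) \<le> Y * \<kappa>\<^sup>2 + \<alpha> * (Y * b)"
    using \<open>r\<^sup>2 = b * \<alpha>\<close> by (simp add: algebra_simps)
  also have "\<dots> \<le> \<kappa> * (\<kappa> * (Y + \<alpha> * \<sigma>))"
    using mult_left_mono[OF Yb, of \<alpha>] assms(2) by (simp add: power2_eq_square algebra_simps)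
  finally have "2 * r * Y \<le> \<kappa> * (Y + \<alpha> * \<sigma>)" using assms(1) by simp
  then have "Y * (2 * r) \<le> \<kappa> * (Y + \<alpha> * \<sigma>)" by (simp add: mult_ac)
  then have "Y \<le> \<kappa> * (Y + \<alpha> * \<sigma>) / (2 * r)" using \<open>r > 0\<close> by (simp add: pos_le_divide_eq)
  also have "\<dots> = 1 / (2 * sqrt b) * \<kappa> / sqrt \<alpha> * (Y + \<alpha> * \<sigma>)" by (simp add: r_def)
  finally show ?thesis .
qed

lemma assumption_A1_bound_nonneg:
  assumes "nl_reg_filter phi" "assumption_A1 phi" "\<kappa> > 0" "\<alpha> > 0" "\<beta> > 0" "b > 0"
    and "x \<ge> 0" "x \<le> \<alpha> * \<delta>" "u \<ge> 0" "phi \<beta> \<kappa> u + \<beta> * \<delta> \<le> u"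
    and contraction: "\<And>z. \<bar>z\<bar> \<le> u \<Longrightarrow> \<bar>phi \<beta> \<kappa> z\<bar> \<le> \<kappa>\<^sup>2 / (\<kappa>\<^sup>2 + \<beta> * b) * \<bar>z\<bar>"
  shows "phi \<alpha> \<kappa> x \<le> 1 / (2 * sqrt b) * \<kappa> / sqrt \<alpha> * x"
proof -
  define y s where "y = phi \<alpha> \<kappa> x" and "s = (x - y) / \<alpha>"
  define w where "w = y + \<beta> * s"
  have "x = y + \<alpha> * s" using assms(4) by (simp add: s_def)
  have "phi \<beta> \<kappa> w = y"
    unfolding w_def s_def by (rule assumption_A1_rescale[OF assms(2,3,4,5) y_def[symmetric]])
  have "0 \<le> y" "y \<le> x" using nl_reg_filter_nonneg_le[OF assms(1,4,3,7)] by (auto simp: y_def)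
  then have "0 \<le> s" using assms(4) by (simp add: s_def)
  have "x - y \<le> \<alpha> * \<delta>" using \<open>0 \<le> y\<close> assms(8) by linarith
  then have "s \<le> \<delta>" using assms(4) by (simp add: s_def pos_divide_le_eq mult.commute)
  have "y \<le> phi \<beta> \<kappa> u"
  proof (cases "y = 0")
    case True
    then show ?thesis using nl_reg_filter_nonneg_le[OF assms(1,5,3,9)] by simp
  next
    case False
    then have "x - y < \<alpha> * \<delta>" using \<open>0 \<le> y\<close> assms(8) by linarith
    then have "s < \<delta>" using assms(4) by (simp add: s_def pos_divide_less_eq mult.commute)
    then have "w - phi \<beta> \<kappa> w < u - phi \<beta> \<kappa> u"
      using \<open>phi \<beta> \<kappa> w = y\<close> mult_strict_left_mono[OF \<open>s < \<delta>\<close> assms(5)] assms(10)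
      by (simp add: w_def)
    with assumption_A1_residual_less_imp_le[OF assms(1,2,3,5)] show ?thesis
      using \<open>phi \<beta> \<kappa> w = y\<close> by metis
  qed
  moreover have "\<beta> * s \<le> \<beta> * \<delta>" using \<open>s \<le> \<delta>\<close> assms(5) by simp
  ultimately have "w \<le> u" using assms(10) unfolding w_def by linarith
  moreover have "0 \<le> w" using \<open>0 \<le> y\<close> \<open>0 \<le> s\<close> assms(5) by (simp add: w_def)
  ultimately have "\<bar>w\<bar> \<le> u" by simp
  then have "y \<le> \<kappa>\<^sup>2 / (\<kappa>\<^sup>2 + \<beta> * b) * (y + \<beta> * s)"
    using contraction[of w] \<open>phi \<beta> \<kappa> w = y\<close> \<open>0 \<le> y\<close> \<open>0 \<le> s\<close> assms(5) by (simp add: w_def)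
  from contraction_imp_sqrt_bound[OF assms(3,4,5,6) \<open>0 \<le> y\<close> \<open>0 \<le> s\<close> this]
  have "y \<le> 1 / (2 * sqrt b) * \<kappa> / sqrt \<alpha> * x" using \<open>x = y + \<alpha> * s\<close> by simp
  then show ?thesis by (simp add: y_def)
qed

lemma assumption_A2_contraction_window:
  assumes nl: "nl_reg_filter phi" and A1: "assumption_A1 phi"
    and "\<alpha>t > 0" "b > 0" "c > 0" and A2: "assumption_A2 phi \<alpha>t b c" and "\<kappa> > 0"
  obtains m where "m \<ge> 0" "\<alpha>t * (b * c / \<kappa>) \<le> m - \<kappa>\<^sup>2 / (\<kappa>\<^sup>2 + \<alpha>t * b) * m"
    and "\<And>z. \<bar>z\<bar> \<le> m \<Longrightarrow> \<bar>phi \<alpha>t \<kappa> z\<bar> \<le> \<kappa>\<^sup>2 / (\<kappa>\<^sup>2 + \<alpha>t * b) * \<bar>z\<bar>"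
proof
  define m where "m = preimage_min phi \<alpha>t \<kappa> (c * \<kappa>)"
  have "c * \<kappa> > 0" using \<open>c > 0\<close> \<open>\<kappa> > 0\<close> by simp
  have "phi \<alpha>t \<kappa> m = c * \<kappa>"
    unfolding m_def by (rule preimage_min_preimage[OF nl A1 \<open>\<kappa> > 0\<close> \<open>\<alpha>t > 0\<close> \<open>c * \<kappa> > 0\<close>])
  then show "m \<ge> 0"
    using nl_reg_filter_pos_imp_pos[OF nl \<open>\<alpha>t > 0\<close> \<open>\<kappa> > 0\<close>, of m] \<open>c * \<kappa> > 0\<close> by simp
  show contraction: "\<bar>phi \<alpha>t \<kappa> z\<bar> \<le> \<kappa>\<^sup>2 / (\<kappa>\<^sup>2 + \<alpha>t * b) * \<bar>z\<bar>" if "\<bar>z\<bar> \<le> m" for z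
    using A2[unfolded assumption_A2_def, rule_format, OF \<open>\<kappa> > 0\<close> that[unfolded m_def]] .
  have "c * \<kappa> \<le> \<kappa>\<^sup>2 / (\<kappa>\<^sup>2 + \<alpha>t * b) * m"
    using contraction[of m] \<open>phi \<alpha>t \<kappa> m = c * \<kappa>\<close> \<open>m \<ge> 0\<close> by simp
  then show "\<alpha>t * (b * c / \<kappa>) \<le> m - \<kappa>\<^sup>2 / (\<kappa>\<^sup>2 + \<alpha>t * b) * m"
    by (rule contraction_margin[OF \<open>\<kappa> > 0\<close> \<open>\<alpha>t > 0\<close> \<open>b > 0\<close>])
qed

lemma assumption_B2_if_A2:
  assumes nl: "nl_reg_filter phi" and A1: "assumption_A1 phi"
    and "\<alpha>t > 0" "b > 0" "c > 0" and A2: "assumption_A2 phi \<alpha>t b c"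
  shows "assumption_B2 phi (b * c) (1 / (2 * sqrt b))"
  unfolding assumption_B2_def
proof (intro allI impI)
  fix \<kappa> \<alpha> x :: real
  assume "\<kappa> > 0" "\<alpha> > 0" "\<bar>x\<bar> \<le> b * c * \<alpha> / \<kappa>"
  then have bound_x: "\<bar>x\<bar> \<le> \<alpha> * (b * c / \<kappa>)" by (simp add: ac_simps)
  obtain m where "m \<ge> 0" and margin: "\<alpha>t * (b * c / \<kappa>) \<le> m - \<kappa>\<^sup>2 / (\<kappa>\<^sup>2 + \<alpha>t * b) * m"
    and contraction: "\<And>z. \<bar>z\<bar> \<le> m \<Longrightarrow> \<bar>phi \<alpha>t \<kappa> z\<bar> \<le> \<kappa>\<^sup>2 / (\<kappa>\<^sup>2 + \<alpha>t * b) * \<bar>z\<bar>"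
    using assumption_A2_contraction_window[OF assms \<open>\<kappa> > 0\<close>] by blast
  show "\<bar>phi \<alpha> \<kappa> x\<bar> \<le> 1 / (2 * sqrt b) * \<kappa> / sqrt \<alpha> * \<bar>x\<bar>"
  proof (cases "x \<ge> 0")
    case True
    have "x \<le> \<alpha> * (b * c / \<kappa>)" using bound_x by simp
    moreover have "phi \<alpha>t \<kappa> m + \<alpha>t * (b * c / \<kappa>) \<le> m"
      using margin contraction[of m] \<open>m \<ge> 0\<close> by simp
    ultimately have "phi \<alpha> \<kappa> x \<le> 1 / (2 * sqrt b) * \<kappa> / sqrt \<alpha> * x"
      by (rule assumption_A1_bound_nonneg[OF nl A1 \<open>\<kappa> > 0\<close> \<open>\<alpha> > 0\<close> \<open>\<alpha>t > 0\<close> \<open>b > 0\<close> True _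
            \<open>m \<ge> 0\<close> _ contraction])
    then show ?thesis using True nl_reg_filter_nonneg_le[OF nl \<open>\<alpha> > 0\<close> \<open>\<kappa> > 0\<close> True] by simp
  next
    case False
    then have "- x \<ge> 0" by simp
    have reflected_contraction:
      "\<bar>reflect_filter phi \<alpha>t \<kappa> z\<bar> \<le> \<kappa>\<^sup>2 / (\<kappa>\<^sup>2 + \<alpha>t * b) * \<bar>z\<bar>" if "\<bar>z\<bar> \<le> m" for z
      using contraction[of "- z"] that by (simp add: reflect_filter_def)
    have "- x \<le> \<alpha> * (b * c / \<kappa>)" using bound_x by simp
    moreover have "reflect_filter phi \<alpha>t \<kappa> m + \<alpha>t * (b * c / \<kappa>) \<le> m"
      using margin reflected_contraction[of m] \<open>m \<ge> 0\<close> by simp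
    ultimately have "reflect_filter phi \<alpha> \<kappa> (- x) \<le> 1 / (2 * sqrt b) * \<kappa> / sqrt \<alpha> * (- x)"
      by (rule assumption_A1_bound_nonneg[OF nl_reg_filter_reflect[OF nl] assumption_A1_reflect[OF A1]
            \<open>\<kappa> > 0\<close> \<open>\<alpha> > 0\<close> \<open>\<alpha>t > 0\<close> \<open>b > 0\<close> \<open>- x \<ge> 0\<close> _ \<open>m \<ge> 0\<close> _ reflected_contraction])
    then show ?thesis
      using False nl_reg_filter_nonneg_le[OF nl_reg_filter_reflect[OF nl] \<open>\<alpha> > 0\<close> \<open>\<kappa> > 0\<close> \<open>- x \<ge> 0\<close>]
      by (simp add: reflect_filter_def)
  qed
qed

theorem lemma4p5:
  fixes phi :: "real \<Rightarrow> real \<Rightarrow> real \<Rightarrow> real" and \<alpha>t b c :: real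
  assumes "nl_reg_filter phi"
    and "assumption_A1 phi"
    and "\<alpha>t > 0" and "b > 0" and "c > 0"
    and "assumption_A2 phi \<alpha>t b c"
  shows "assumption_B1 phi \<and> assumption_B2 phi (b * c) (1 / (2 * sqrt b))"
  using assumption_B1_if_A1[OF assms(1,2)] assumption_B2_if_A2[OF assms] by simp

end
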